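(* Let $n\ge 2$, and let $S$ be a semitransitive subsemigroup of $\mathcal{I}_n\setminus\mathcal{S}_n$ with $|S|\le 2n$, with transitivity blocks $X_1,\dots,X_m$. Then for every idempotent $e\in S$ and every block $X_s$, either $\mathrm{dom}(e)\cap X_s=\varnothing$ or $X_s\subseteq\mathrm{dom}(e)$.
   Context: $\mathcal{I}_n$ denotes the symmetric inverse semigroup of all partial injective maps of $X=\{1,\dots,n\}$ to itself (including the empty map $0$), with maps written on the right and composed left to right. $\mathcal{S}_n$ is the symmetric group on $X$. A semigroup $S$ of partial transformations of $X$ is semitransitive if for all $x,y\in X$ there is $\varphi\in S$ with $x\varphi=y$ or $y\varphi=x$. For $x,y\in X$ write $x\ge y$ if $x\varphi=y$ for some $\varphi\in S$; for semitransitive $S$ this is a total preorder. The transitivity blocks $X_1,\dots,X_m$ are the equivalence classes of this preorder, numbered so that for $x\in X_i$, $y\in X_j$ one has $x\ge y$ iff $i\le j$. *)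

theory Defs
  imports Main
begin

text \<open>Partial maps of X = {1..n} are modelled as maps nat \<Rightarrow> nat option.
  Maps are written on the right and composed left to right:
  x (f g) = (x f) g.\<close>

definition partial_inj :: "nat \<Rightarrow> (nat \<rightharpoonup> nat) \<Rightarrow> bool" where
  "partial_inj n f \<longleftrightarrow> dom f \<subseteq> {1..n} \<and> ran f \<subseteq> {1..n} \<and> inj_on f (dom f)"

definition sym_inv :: "nat \<Rightarrow> (nat \<rightharpoonup> nat) set" where
  "sym_inv n = {f. partial_inj n f}"

definition sym_grp :: "nat \<Rightarrow> (nat \<rightharpoonup> nat) set" where
  "sym_grp n = {f. partial_inj n f \<and> dom f = {1..n} \<and> ran f = {1..n}}"

definition pcomp :: "(nat \<rightharpoonup> nat) \<Rightarrow> (nat \<rightharpoonup> nat) \<Rightarrow> (nat \<rightharpoonup> nat)" where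
  "pcomp f g = g \<circ>\<^sub>m f"

definition is_subsemigroup :: "(nat \<rightharpoonup> nat) set \<Rightarrow> bool" where
  "is_subsemigroup S \<longleftrightarrow> (\<forall>f\<in>S. \<forall>g\<in>S. pcomp f g \<in> S)"

definition semitransitive :: "nat \<Rightarrow> (nat \<rightharpoonup> nat) set \<Rightarrow> bool" where
  "semitransitive n S \<longleftrightarrow>
     (\<forall>x\<in>{1..n}. \<forall>y\<in>{1..n}. \<exists>\<phi>\<in>S. \<phi> x = Some y \<or> \<phi> y = Some x)"

text \<open>x \<ge> y iff x \<phi> = y for some \<phi> in S.\<close>
definition reach :: "(nat \<rightharpoonup> nat) set \<Rightarrow> nat \<Rightarrow> nat \<Rightarrow> bool" where
  "reach S x y \<longleftrightarrow> (\<exists>\<phi>\<in>S. \<phi> x = Some y)"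

definition trans_blocks :: "nat \<Rightarrow> (nat \<rightharpoonup> nat) set \<Rightarrow> nat set set" where
  "trans_blocks n S = {{y\<in>{1..n}. reach S x y \<and> reach S y x} | x. x \<in> {1..n}}"

definition idempotent :: "(nat \<rightharpoonup> nat) \<Rightarrow> bool" where
  "idempotent e \<longleftrightarrow> pcomp e e = e"

end

theory Submission
  imports Defs
begin

text \<open>
  Call (e, p, q) a separation if e is an idempotent of S, p and q lie in the
  same transitivity block, p \<in> dom e and q \<notin> dom e; the theorem says there is none.
  Idempotents of I_n are partial identities, and every element of the finite semigroup S
  has an idempotent power.  Assuming a separation exists, pick one, (e, x, y), with
  |dom e| minimal and, for this e, with x maximal in the preorder \<ge>.  Composing e with maps
  x \<mapsto> y and y \<mapsto> x and taking idempotent powers, the minimality forces the restriction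
  \<rho> of a map x \<mapsto> y to dom e to be a bijection of dom e onto dom \<eta>, for an idempotent \<eta>
  with y \<in> dom \<eta> and x \<notin> dom \<eta>; the maximality forces dom e and dom \<eta> to agree on all
  points strictly above x.  From these data one writes down 2n + 1 distinct elements of S:
  the partial identity on dom e \<inter> dom \<eta>, two elements mapping x resp. y to each point
  below x, and two elements mapping each point strictly above x to x resp. to y.  This
  contradicts |S| \<le> 2n.
\<close>

lemma pcomp_apply: "pcomp f g x = (case f x of None \<Rightarrow> None | Some y \<Rightarrow> g y)"
  by (simp add: pcomp_def map_comp_def)

lemma pcomp_assoc: "pcomp (pcomp f g) h = pcomp f (pcomp g h)"
  by (rule ext) (simp add: pcomp_apply split: option.splits)

lemma dom_pcomp_subset: "dom (pcomp f g) \<subseteq> dom f"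
  by (auto simp: pcomp_apply split: option.splits)

lemma ran_pcomp_subset: "ran (pcomp f g) \<subseteq> ran g"
  by (auto simp: pcomp_apply ran_def split: option.splits)

text \<open>ppow f k is the (k+1)-st power of f with respect to pcomp.\<close>
fun ppow :: "(nat \<rightharpoonup> nat) \<Rightarrow> nat \<Rightarrow> (nat \<rightharpoonup> nat)" where
  "ppow f 0 = f"
| "ppow f (Suc k) = pcomp f (ppow f k)"

lemma ppow_add: "ppow f (a + b + 1) = pcomp (ppow f a) (ppow f b)"
  by (induction a) (simp_all add: pcomp_assoc)

lemma ppow_fixpoint: "f p = Some p \<Longrightarrow> ppow f k p = Some p"
  by (induction k) (auto simp: pcomp_apply)

lemma dom_ppow: "dom (ppow f k) \<subseteq> dom f"
  by (cases k) (simp_all add: dom_pcomp_subset)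

lemma ran_ppow: "ran (ppow f k) \<subseteq> ran f"
  by (induction k) (use ran_pcomp_subset in auto)

lemma ppow_periodic:
  assumes "ppow f i = ppow f j" "i < j" "i < t"
  shows "ppow f (t + q * (j - i)) = ppow f t"
proof (induction q)
  case (Suc q)
  define k where "k = t + q * (j - i) - i - 1"
  have k: "t + q * (j - i) = k + i + 1" "t + Suc q * (j - i) = k + j + 1"
    using assms(2,3) by (simp_all add: k_def)
  have "ppow f (k + j + 1) = pcomp (ppow f k) (ppow f i)" using assms(1) by (simp only: ppow_add)
  also have "\<dots> = ppow f (k + i + 1)" by (simp only: ppow_add)
  finally have "ppow f (t + Suc q * (j - i)) = ppow f (t + q * (j - i))" by (simp only: k)
  then show ?case using Suc by simp
qed simp

lemma idempotent_ppow_exists: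
  assumes "finite (range (ppow f))"
  shows "\<exists>m. idempotent (ppow f m)"
proof -
  obtain i j where ij: "i < j" "ppow f i = ppow f j"
    using assms finite_imageD[of "ppow f" UNIV] unfolding inj_def
    by (metis infinite_UNIV_nat linorder_neqE_nat)
  define m where "m = (i + 2) * (j - i) - 1"
  have "(i + 2) * 1 \<le> (i + 2) * (j - i)" using ij(1) by (intro mult_le_mono2) simp
  then have "i < m" "m + m + 1 = m + (i + 2) * (j - i)" by (simp_all add: m_def)
  then have "pcomp (ppow f m) (ppow f m) = ppow f m"
    using ppow_periodic[OF ij(2) ij(1)] by (metis ppow_add)
  then show ?thesis unfolding idempotent_def by blast
qed

text \<open>A chosen idempotent power of f (meaningful when f has finitely many powers).\<close>
definition idem_power :: "(nat \<rightharpoonup> nat) \<Rightarrow> (nat \<rightharpoonup> nat)" where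
  "idem_power f = ppow f (SOME m. idempotent (ppow f m))"

lemma idempotent_idem_power: "finite (range (ppow f)) \<Longrightarrow> idempotent (idem_power f)"
  unfolding idem_power_def by (rule someI_ex) (rule idempotent_ppow_exists)

lemma idem_power_fixpoint: "f p = Some p \<Longrightarrow> idem_power f p = Some p"
  unfolding idem_power_def by (rule ppow_fixpoint)

lemma dom_idem_power: "dom (idem_power f) \<subseteq> dom f"
  unfolding idem_power_def by (rule dom_ppow)

lemma ran_idem_power: "ran (idem_power f) \<subseteq> ran f"
  unfolding idem_power_def by (rule ran_ppow)

lemma idempotent_fixes_image: "idempotent f \<Longrightarrow> f p = Some q \<Longrightarrow> f q = Some q"
  unfolding idempotent_def by (metis option.simps(5) pcomp_apply)

lemma idempotent_partial_identity:
  assumes "inj_on f (dom f)" "idempotent f" "f p = Some q"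
  shows "q = p"
  using assms(1,3) idempotent_fixes_image[OF assms(2,3)] by (metis domI inj_onD)

lemma partial_identity_idempotent:
  assumes "\<And>p q. f p = Some q \<Longrightarrow> q = p"
  shows "idempotent f"
  unfolding idempotent_def
  by (rule ext) (auto simp: pcomp_apply split: option.splits dest: assms)

lemma card_ran_inj:
  assumes "inj_on f (dom f)" "finite (dom f)"
  shows "card (ran f) = card (dom f)"
proof -
  have "ran f = (the \<circ> f) ` dom f" by (force simp: ran_def dom_def)
  moreover have "inj_on (the \<circ> f) (dom f)"
    using assms(1) by (auto simp: inj_on_def dom_def)
  ultimately show ?thesis by (metis card_image)
qed

lemma finite_sym_inv: "finite (sym_inv n)"
proof -
  have "sym_inv n \<subseteq> (\<Union>A\<in>Pow {1..n}. {m. dom m = A \<and> ran m \<subseteq> {1..n}})"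
    by (auto simp: sym_inv_def partial_inj_def)
  moreover have "finite (\<Union>A\<in>Pow {1..n}. {m. dom m = A \<and> ran m \<subseteq> {1..n}})"
    by (intro finite_UN_I finite_set_of_finite_maps) (auto intro: finite_subset)
  ultimately show ?thesis by (rule finite_subset)
qed

definition witness :: "(nat \<rightharpoonup> nat) set \<Rightarrow> nat \<Rightarrow> nat \<Rightarrow> (nat \<rightharpoonup> nat)" where
  "witness S p q = (SOME \<phi>. \<phi> \<in> S \<and> \<phi> p = Some q)"

lemma witness: "reach S p q \<Longrightarrow> witness S p q \<in> S \<and> witness S p q p = Some q"
  unfolding witness_def reach_def using someI_ex[of "\<lambda>\<phi>. \<phi> \<in> S \<and> \<phi> p = Some q"] by blast

locale partial_inj_semigroup =
  fixes n :: nat and S :: "(nat \<rightharpoonup> nat) set"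
  assumes sub_sym_inv: "S \<subseteq> sym_inv n"
    and closed: "is_subsemigroup S"
begin

lemma finite_S: "finite S"
  using sub_sym_inv finite_sym_inv by (rule finite_subset)

lemma pcomp_in: "f \<in> S \<Longrightarrow> g \<in> S \<Longrightarrow> pcomp f g \<in> S"
  using closed by (simp add: is_subsemigroup_def)

lemma element_partial_inj: "f \<in> S \<Longrightarrow> partial_inj n f"
  using sub_sym_inv by (auto simp: sym_inv_def)

lemma finite_dom: "f \<in> S \<Longrightarrow> finite (dom f)"
  using element_partial_inj[of f] finite_subset[of "dom f" "{1..n}"] by (simp add: partial_inj_def)

lemma inj_dom: "f \<in> S \<Longrightarrow> inj_on f (dom f)"
  using element_partial_inj by (simp add: partial_inj_def)

lemma reach_in_X: "reach S p q \<Longrightarrow> p \<in> {1..n} \<and> q \<in> {1..n}"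
proof -
  assume "reach S p q"
  then obtain \<phi> where "\<phi> \<in> S" "\<phi> p = Some q" unfolding reach_def by blast
  then show ?thesis using element_partial_inj[of \<phi>] by (auto simp: partial_inj_def dest: domI ranI)
qed

lemma reach_trans: "reach S p q \<Longrightarrow> reach S q r \<Longrightarrow> reach S p r"
  unfolding reach_def by (metis pcomp_in pcomp_apply option.simps(5))

lemma reach_via: "\<phi> \<in> S \<Longrightarrow> \<phi> p = Some q \<Longrightarrow> reach S p q"
  unfolding reach_def by blast

lemma idem_power_in: "f \<in> S \<Longrightarrow> idem_power f \<in> S \<and> idempotent (idem_power f)"
proof
  assume f: "f \<in> S"
  have ppow_in: "ppow f k \<in> S" for k by (induction k) (simp_all add: f pcomp_in)
  then show "idem_power f \<in> S" by (simp add: idem_power_def)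
  have "range (ppow f) \<subseteq> S" using ppow_in by blast
  then show "idempotent (idem_power f)"
    using finite_S by (intro idempotent_idem_power) (rule finite_subset)
qed

lemma idempotent_identity: "e \<in> S \<Longrightarrow> idempotent e \<Longrightarrow> e p = Some q \<Longrightarrow> q = p"
  using inj_dom idempotent_partial_identity by blast

lemma idempotent_on_dom: "e \<in> S \<Longrightarrow> idempotent e \<Longrightarrow> p \<in> dom e \<Longrightarrow> e p = Some p"
  using idempotent_identity by blast

lemma idem_power_back:
  assumes f: "f \<in> S" and w: "w \<in> dom (idem_power f)"
  shows "\<exists>v. f w = Some v \<and> reach S v w"
proof -
  obtain k where k: "idem_power f = ppow f k" by (simp add: idem_power_def)
  have fix_w: "ppow f k w = Some w"
    using idem_power_in[OF f] idempotent_on_dom w k by metis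
  show ?thesis
  proof (cases k)
    case 0
    then show ?thesis using fix_w f reach_via by auto
  next
    case (Suc k')
    then obtain v where "f w = Some v" "ppow f k' v = Some w"
      using fix_w by (auto simp: pcomp_apply split: option.splits)
    moreover have "ppow f k' \<in> S" using f by (induction k') (simp_all add: pcomp_in)
    ultimately show ?thesis using reach_via by blast
  qed
qed

end

lemma semitransitive_reach_total:
  "semitransitive n S \<Longrightarrow> p \<in> {1..n} \<Longrightarrow> q \<in> {1..n} \<Longrightarrow> reach S p q \<or> reach S q p"
  unfolding semitransitive_def reach_def by blast

definition separates :: "(nat \<rightharpoonup> nat) set \<Rightarrow> (nat \<rightharpoonup> nat) \<Rightarrow> nat \<Rightarrow> nat \<Rightarrow> bool" where
  "separates S e p q \<longleftrightarrow>
     e \<in> S \<and> idempotent e \<and> p \<in> dom e \<and> q \<notin> dom e \<and> reach S p q \<and> reach S q p"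

context partial_inj_semigroup
begin

lemma extremal_separation_exists:
  assumes "separates S e0 p0 q0"
  obtains e x y where "separates S e x y"
    and "\<And>e' p q. separates S e' p q \<Longrightarrow> card (dom e) \<le> card (dom e')"
    and "\<And>p q. separates S e p q \<Longrightarrow> reach S p x \<Longrightarrow> reach S x p"
proof -
  obtain e where e: "\<exists>p q. separates S e p q"
    and e_min: "\<And>e' p q. separates S e' p q \<Longrightarrow> card (dom e) \<le> card (dom e')"
    using ex_has_least_nat[of "\<lambda>e. \<exists>p q. separates S e p q" e0 "\<lambda>e. card (dom e)"] assms
    by blast
  define below where "below p = card {z. reach S p z}" for p
  have "below p < Suc n" for p
    using card_mono[of "{1..n}" "{z. reach S p z}"] reach_in_X by (force simp: below_def)
  then obtain x y where sep: "separates S e x y"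
    and x_max: "\<And>p q. separates S e p q \<Longrightarrow> below p \<le> below x"
    using Lattices_Big.ex_has_greatest_nat[of "\<lambda>p. \<exists>q. separates S e p q" _ below "Suc n"] e
    by metis
  have "reach S x p" if p: "separates S e p q" "reach S p x" for p q
  proof (rule ccontr)
    assume "\<not> reach S x p"
    moreover have "reach S p p" using p(1) reach_trans by (auto simp: separates_def)
    ultimately have "{z. reach S x z} \<subset> {z. reach S p z}"
      using p(2) reach_trans by blast
    then have "below x < below p"
      unfolding below_def using reach_in_X
      by (intro psubset_card_mono) (auto intro: finite_subset[of _ "{1..n}"])
    then show False using x_max[OF p(1)] by simp
  qed
  then show ?thesis using that sep e_min by blast
qed

end

locale extremal_separation = partial_inj_semigroup +
  fixes e :: "nat \<rightharpoonup> nat" and x y :: nat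
  assumes separation: "separates S e x y"
    and minimal: "\<And>e' p q. separates S e' p q \<Longrightarrow> card (dom e) \<le> card (dom e')"
    and maximal: "\<And>p q. separates S e p q \<Longrightarrow> reach S p x \<Longrightarrow> reach S x p"
begin

lemma e_in: "e \<in> S" and e_idem: "idempotent e" and x_dom: "x \<in> dom e"
  and y_dom: "y \<notin> dom e" and x_y: "reach S x y" and y_x: "reach S y x"
  using separation by (auto simp: separates_def)

lemma e_identity: "e p = Some q \<Longrightarrow> q = p"
  using idempotent_identity e_in e_idem by blast

lemma e_on_dom: "p \<in> dom e \<Longrightarrow> e p = Some p"
  using e_identity by blast

lemma ran_e: "ran e \<subseteq> dom e"
  using e_identity by (force simp: ran_def)

text \<open>\<rho> restricts a map x \<mapsto> y to dom e, \<sigma> corestricts a map y \<mapsto> x to dom e, \<eta> is the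
  idempotent power of \<sigma>\<rho> (which fixes y) and \<epsilon> is the partial identity on dom e \<inter> dom \<eta>.\<close>
definition \<rho> where "\<rho> = pcomp e (witness S x y)"
definition \<sigma> where "\<sigma> = pcomp (witness S y x) e"
definition \<eta> where "\<eta> = idem_power (pcomp \<sigma> \<rho>)"
definition \<epsilon> where "\<epsilon> = pcomp e \<eta>"

lemma \<rho>_in: "\<rho> \<in> S" and \<sigma>_in: "\<sigma> \<in> S"
  using witness x_y y_x e_in pcomp_in by (simp_all add: \<rho>_def \<sigma>_def)

lemma \<eta>_in: "\<eta> \<in> S" and \<eta>_idem: "idempotent \<eta>"
  using idem_power_in[OF pcomp_in[OF \<sigma>_in \<rho>_in]] by (simp_all add: \<eta>_def)

lemma \<rho>_x: "\<rho> x = Some y" and \<sigma>_y: "\<sigma> y = Some x"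
  using witness x_y y_x e_on_dom x_dom by (simp_all add: \<rho>_def \<sigma>_def pcomp_apply)

lemma dom_\<rho>_subset: "dom \<rho> \<subseteq> dom e"
  unfolding \<rho>_def by (rule dom_pcomp_subset)

lemma ran_\<sigma>_subset: "ran \<sigma> \<subseteq> dom e"
  unfolding \<sigma>_def using ran_pcomp_subset ran_e by blast

text \<open>The idempotent power of \<rho>\<sigma> fixes x but not y, so by minimality of |dom e| its domain
  is all of dom e.\<close>
lemma dom_idem_power_\<rho>\<sigma>: "dom (idem_power (pcomp \<rho> \<sigma>)) = dom e"
proof -
  let ?f = "idem_power (pcomp \<rho> \<sigma>)"
  have f: "?f \<in> S" "idempotent ?f" using idem_power_in pcomp_in \<rho>_in \<sigma>_in by blast+
  have "?f x = Some x" using \<rho>_x \<sigma>_y by (intro idem_power_fixpoint) (simp add: pcomp_apply)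
  moreover have dom_f: "dom ?f \<subseteq> dom e"
    using dom_idem_power dom_pcomp_subset dom_\<rho>_subset by blast
  ultimately have "separates S ?f x y"
    using f y_dom x_y y_x by (auto simp: separates_def)
  then show ?thesis
    using minimal dom_f finite_dom[OF e_in] by (metis card_seteq)
qed

lemma dom_\<rho>: "dom \<rho> = dom e"
  using dom_idem_power_\<rho>\<sigma> dom_idem_power dom_pcomp_subset dom_\<rho>_subset by blast

lemma \<rho>_back:
  assumes "w \<in> dom e"
  shows "\<exists>v. \<rho> w = Some v \<and> reach S v w"
proof -
  obtain u where u: "pcomp \<rho> \<sigma> w = Some u" "reach S u w"
    using idem_power_back[OF pcomp_in[OF \<rho>_in \<sigma>_in]] dom_idem_power_\<rho>\<sigma> assms by blast
  then obtain v where v: "\<rho> w = Some v" "\<sigma> v = Some u"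
    by (auto simp: pcomp_apply split: option.splits)
  then have "reach S v w" using u(2) reach_via[OF \<sigma>_in] reach_trans by blast
  then show ?thesis using v(1) by blast
qed

lemma card_ran_\<rho>: "card (ran \<rho>) = card (dom e)"
  using card_ran_inj[OF inj_dom[OF \<rho>_in] finite_dom[OF \<rho>_in]] dom_\<rho> by simp

lemma \<eta>_y: "\<eta> y = Some y"
  unfolding \<eta>_def using \<rho>_x \<sigma>_y by (intro idem_power_fixpoint) (simp add: pcomp_apply)

lemma \<eta>_identity: "\<eta> p = Some q \<Longrightarrow> q = p"
  using idempotent_identity \<eta>_in \<eta>_idem by blast

lemma \<eta>_on_dom: "p \<in> dom \<eta> \<Longrightarrow> \<eta> p = Some p"
  using \<eta>_identity by blast

lemma dom_\<eta>_subset: "dom \<eta> \<subseteq> ran \<rho>"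
proof
  fix w assume "w \<in> dom \<eta>"
  then have "w \<in> ran \<eta>" using \<eta>_on_dom by (blast intro: ranI)
  then show "w \<in> ran \<rho>" unfolding \<eta>_def using ran_idem_power ran_pcomp_subset by blast
qed

lemma \<epsilon>_apply: "\<epsilon> w = (if w \<in> dom e \<inter> dom \<eta> then Some w else None)"
proof (cases "w \<in> dom e")
  case True
  then show ?thesis using e_on_dom \<eta>_on_dom by (auto simp: \<epsilon>_def pcomp_apply)
qed (auto simp: \<epsilon>_def pcomp_apply split: option.splits)

lemma \<epsilon>_in: "\<epsilon> \<in> S"
  unfolding \<epsilon>_def using pcomp_in e_in \<eta>_in by blast

lemma \<epsilon>_idem: "idempotent \<epsilon>"
  by (rule partial_identity_idempotent) (simp add: \<epsilon>_apply split: if_splits)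

lemma dom_\<epsilon>: "dom \<epsilon> = dom e \<inter> dom \<eta>"
  by (auto simp: \<epsilon>_apply dom_def)

text \<open>If x were in dom \<eta>, then \<epsilon> would separate x and y with |dom \<epsilon>| \<le> |dom e| and thus
  dom e \<subseteq> dom \<eta> \<subseteq> ran \<rho>; counting gives dom e = ran \<rho>, but y \<in> ran \<rho> - dom e.\<close>
lemma x_notin_dom_\<eta>: "x \<notin> dom \<eta>"
proof
  assume "x \<in> dom \<eta>"
  then have "separates S \<epsilon> x y"
    using \<epsilon>_in \<epsilon>_idem x_dom y_dom x_y y_x by (simp add: separates_def dom_\<epsilon>)
  then have "card (dom e) \<le> card (dom e \<inter> dom \<eta>)" using minimal dom_\<epsilon> by metis
  then have "dom e \<subseteq> ran \<rho>"
    using finite_dom[OF e_in] card_seteq[of "dom e" "dom e \<inter> dom \<eta>"] dom_\<eta>_subset by blast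
  then have "dom e = ran \<rho>"
    using card_seteq[OF finite_ran[OF finite_dom[OF \<rho>_in]]] card_ran_\<rho> by simp
  then show False using y_dom \<rho>_x by (blast intro: ranI)
qed

text \<open>So \<eta> separates y and x, and minimality gives dom \<eta> = ran \<rho>.\<close>
lemma dom_\<eta>: "dom \<eta> = ran \<rho>"
proof -
  have "separates S \<eta> y x"
    using \<eta>_in \<eta>_idem \<eta>_y x_notin_dom_\<eta> x_y y_x by (auto simp: separates_def)
  then have "card (ran \<rho>) \<le> card (dom \<eta>)" using minimal card_ran_\<rho> by metis
  then show ?thesis
    using card_seteq[OF _ dom_\<eta>_subset] finite_ran finite_dom[OF \<rho>_in] by blast
qed

text \<open>For u strictly above x, maximality of x puts the whole block of u into dom e; \<rho> permutes
  that block, so u \<in> ran \<rho> = dom \<eta>.\<close>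
lemma above_x_dom_e_imp_dom_\<eta>:
  assumes above: "reach S u x" "\<not> reach S x u" and u: "u \<in> dom e"
  shows "u \<in> dom \<eta>"
proof -
  define K where "K = {w. reach S u w \<and> reach S w u}"
  have K_dom: "K \<subseteq> dom e"
  proof
    fix w assume "w \<in> K"
    then have "w \<notin> dom e \<Longrightarrow> separates S e u w"
      using e_in e_idem u by (simp add: separates_def K_def)
    then show "w \<in> dom e" using maximal above by blast
  qed
  define g where "g w = the (\<rho> w)" for w
  have \<rho>_g: "w \<in> K \<Longrightarrow> \<rho> w = Some (g w)" for w
    using K_dom dom_\<rho> by (force simp: g_def)
  have "g ` K \<subseteq> K"
  proof
    fix v assume "v \<in> g ` K"
    then obtain w where w: "w \<in> K" "\<rho> w = Some v" using \<rho>_g by blast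
    then have "reach S v w" using \<rho>_back K_dom by fastforce
    then show "v \<in> K" using w reach_via[OF \<rho>_in] reach_trans by (simp add: K_def) blast
  qed
  moreover have "inj_on g K"
    using inj_dom[OF \<rho>_in] \<rho>_g by (auto simp: inj_on_def dom_def)
  moreover have "finite K" using K_dom finite_dom[OF e_in] finite_subset by blast
  ultimately have "g ` K = K" using endo_inj_surj by blast
  moreover have "u \<in> K" using reach_via[OF e_in e_on_dom[OF u]] by (simp add: K_def)
  ultimately obtain w where "w \<in> K" "\<rho> w = Some u" using \<rho>_g by (metis imageE)
  then show ?thesis using dom_\<eta> by (blast intro: ranI)
qed

text \<open>Conversely, a point u strictly above x with u \<in> dom \<eta> - dom e would be separated by e
  from the \<sigma>-image of u, a point of the block of u, contradicting maximality of x.\<close>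
lemma above_x_dom_\<eta>_imp_dom_e:
  assumes above: "reach S u x" "\<not> reach S x u" and u: "u \<in> dom \<eta>"
  shows "u \<in> dom e"
proof (rule ccontr)
  assume u_e: "u \<notin> dom e"
  obtain t where t: "pcomp \<sigma> \<rho> u = Some t" "reach S t u"
    using idem_power_back[OF pcomp_in[OF \<sigma>_in \<rho>_in]] u by (auto simp: \<eta>_def)
  then obtain v where v: "\<sigma> u = Some v" "\<rho> v = Some t"
    by (auto simp: pcomp_apply split: option.splits)
  have "v \<in> dom e" using v(1) ran_\<sigma>_subset by (blast intro: ranI)
  moreover have "reach S u v" "reach S v u"
    using v t(2) reach_via \<sigma>_in \<rho>_in reach_trans by blast+
  ultimately have "separates S e v u" using e_in e_idem u_e by (simp add: separates_def)
  then have "reach S x v" using maximal reach_trans[OF \<open>reach S v u\<close> above(1)] by blast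
  then show False using above(2) reach_trans[OF _ \<open>reach S v u\<close>] by blast
qed

definition below_x where "below_x = {z. reach S x z}"
definition above_x where "above_x = {u. reach S u x \<and> \<not> reach S x u}"

lemma above_x_dom_iff: "u \<in> above_x \<Longrightarrow> u \<in> dom e \<longleftrightarrow> u \<in> dom \<eta>"
  using above_x_dom_e_imp_dom_\<eta> above_x_dom_\<eta>_imp_dom_e unfolding above_x_def by blast

text \<open>The elements counted: from_x z and from_y z send x resp. y to z (for z below x); to_x u and
  to_y u send u to x resp. y (for u above x), precomposed with \<epsilon> when u \<in> dom e so that their
  domain avoids x and y.\<close>
definition from_x where "from_x z = pcomp e (witness S x z)"
definition from_y where "from_y z = pcomp \<eta> (witness S y z)"
definition guard where "guard u \<phi> = (if u \<in> dom e then pcomp \<epsilon> \<phi> else \<phi>)"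
definition to_x where "to_x u = guard u (pcomp (witness S u x) e)"
definition to_y where "to_y u = guard u (pcomp (witness S u y) \<eta>)"

lemma from_x: "z \<in> below_x \<Longrightarrow> from_x z \<in> S \<and> from_x z x = Some z \<and> dom (from_x z) \<subseteq> dom e"
  using witness[of S x z] e_in pcomp_in e_on_dom[OF x_dom] dom_pcomp_subset
  by (simp add: from_x_def below_x_def pcomp_apply)

lemma from_y: "z \<in> below_x \<Longrightarrow> from_y z \<in> S \<and> from_y z y = Some z \<and> dom (from_y z) \<subseteq> dom \<eta>"
  using witness[of S y z] reach_trans[OF y_x] \<eta>_in pcomp_in \<eta>_y dom_pcomp_subset
  by (simp add: from_y_def below_x_def pcomp_apply)

lemma guard:
  assumes "\<phi> \<in> S" "u \<in> dom e \<longleftrightarrow> u \<in> dom \<eta>"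
  shows "guard u \<phi> \<in> S" "guard u \<phi> u = \<phi> u" "ran (guard u \<phi>) \<subseteq> ran \<phi>"
    and "u \<in> dom e \<Longrightarrow> dom (guard u \<phi>) \<subseteq> dom e \<inter> dom \<eta>"
proof -
  show "guard u \<phi> \<in> S" using assms(1) \<epsilon>_in pcomp_in by (simp add: guard_def)
  show "guard u \<phi> u = \<phi> u" using assms(2) by (simp add: guard_def pcomp_apply \<epsilon>_apply)
  show "ran (guard u \<phi>) \<subseteq> ran \<phi>" using ran_pcomp_subset by (simp add: guard_def)
  show "dom (guard u \<phi>) \<subseteq> dom e \<inter> dom \<eta>" if "u \<in> dom e"
    using that dom_pcomp_subset[of \<epsilon> \<phi>] by (simp add: guard_def dom_\<epsilon>)
qed

lemma to_x:
  assumes u: "u \<in> above_x"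
  shows "to_x u \<in> S" "to_x u u = Some x" "ran (to_x u) \<subseteq> dom e"
    and "u \<in> dom e \<Longrightarrow> dom (to_x u) \<subseteq> dom e \<inter> dom \<eta>"
proof -
  let ?\<phi> = "pcomp (witness S u x) e"
  have "witness S u x \<in> S \<and> witness S u x u = Some x" using witness u by (simp add: above_x_def)
  then have \<phi>: "?\<phi> \<in> S" "?\<phi> u = Some x" "ran ?\<phi> \<subseteq> dom e"
    using e_in pcomp_in e_on_dom[OF x_dom] order_trans[OF ran_pcomp_subset ran_e]
    by (simp_all add: pcomp_apply)
  note g = guard[OF \<phi>(1) above_x_dom_iff[OF u]]
  show "to_x u \<in> S" "to_x u u = Some x" "ran (to_x u) \<subseteq> dom e"
    "u \<in> dom e \<Longrightarrow> dom (to_x u) \<subseteq> dom e \<inter> dom \<eta>"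
    using g \<phi> by (auto simp: to_x_def)
qed

lemma to_y:
  assumes u: "u \<in> above_x"
  shows "to_y u \<in> S" "to_y u u = Some y"
    and "u \<in> dom e \<Longrightarrow> dom (to_y u) \<subseteq> dom e \<inter> dom \<eta>"
proof -
  let ?\<phi> = "pcomp (witness S u y) \<eta>"
  have "reach S u y" using u reach_trans x_y unfolding above_x_def by blast
  then have "witness S u y \<in> S \<and> witness S u y u = Some y" using witness by blast
  then have \<phi>: "?\<phi> \<in> S" "?\<phi> u = Some y" using \<eta>_in pcomp_in \<eta>_y by (simp_all add: pcomp_apply)
  note g = guard[OF \<phi>(1) above_x_dom_iff[OF u]]
  show "to_y u \<in> S" "to_y u u = Some y"
    "u \<in> dom e \<Longrightarrow> dom (to_y u) \<subseteq> dom e \<inter> dom \<eta>"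
    using g \<phi> by (auto simp: to_y_def)
qed

lemma below_x_subset: "below_x \<subseteq> {1..n}" and above_x_subset: "above_x \<subseteq> {1..n}"
  using reach_in_X by (auto simp: below_x_def above_x_def)

lemma finite_below_x: "finite below_x" and finite_above_x: "finite above_x"
  using below_x_subset above_x_subset by (auto intro: finite_subset)

text \<open>Each family is injective (by its value at x, y or u) and the two families of each kind
  are disjoint (y \<notin> dom e).\<close>
lemma card_from: "card (from_x ` below_x \<union> from_y ` below_x) = 2 * card below_x"
proof -
  have "inj_on from_x below_x"
  proof (rule inj_onI)
    fix z z' assume "z \<in> below_x" "z' \<in> below_x" "from_x z = from_x z'"
    then show "z = z'" using from_x by (metis option.inject)
  qed
  moreover have "inj_on from_y below_x"
  proof (rule inj_onI)
    fix z z' assume "z \<in> below_x" "z' \<in> below_x" "from_y z = from_y z'"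
    then show "z = z'" using from_y by (metis option.inject)
  qed
  moreover have "from_x ` below_x \<inter> from_y ` below_x = {}"
  proof (rule equals0I)
    fix \<phi> assume "\<phi> \<in> from_x ` below_x \<inter> from_y ` below_x"
    then obtain z z' where "z \<in> below_x" "z' \<in> below_x" "\<phi> = from_x z" "\<phi> = from_y z'"
      by blast
    then have "dom \<phi> \<subseteq> dom e" "y \<in> dom \<phi>" using from_x[of z] from_y[of z'] by auto
    then show False using y_dom by blast
  qed
  ultimately show ?thesis using finite_below_x by (simp add: card_Un_disjoint card_image)
qed

lemma card_to: "card (to_x ` above_x \<union> to_y ` above_x) = 2 * card above_x"
proof -
  have "inj_on to_x above_x"
  proof (rule inj_onI)
    fix u u' assume u: "u \<in> above_x" "u' \<in> above_x" "to_x u = to_x u'"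
    then have "to_x u u' = Some x" "to_x u u = Some x"
      using to_x(2)[OF u(1)] to_x(2)[OF u(2)] by simp_all
    then show "u = u'" using inj_dom[OF to_x(1)[OF u(1)]] by (metis domI inj_onD)
  qed
  moreover have "inj_on to_y above_x"
  proof (rule inj_onI)
    fix u u' assume u: "u \<in> above_x" "u' \<in> above_x" "to_y u = to_y u'"
    then have "to_y u u' = Some y" "to_y u u = Some y"
      using to_y(2)[OF u(1)] to_y(2)[OF u(2)] by simp_all
    then show "u = u'" using inj_dom[OF to_y(1)[OF u(1)]] by (metis domI inj_onD)
  qed
  moreover have "to_x ` above_x \<inter> to_y ` above_x = {}"
  proof (rule equals0I)
    fix \<phi> assume "\<phi> \<in> to_x ` above_x \<inter> to_y ` above_x"
    then obtain u u' where "u \<in> above_x" "u' \<in> above_x" "\<phi> = to_x u" "\<phi> = to_y u'"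
      by blast
    then have "ran \<phi> \<subseteq> dom e" "\<phi> u' = Some y" using to_x(3)[of u] to_y(2)[of u'] by auto
    then show False using y_dom by (blast intro: ranI)
  qed
  ultimately show ?thesis using finite_above_x by (simp add: card_Un_disjoint card_image)
qed

text \<open>The two kinds of maps are told apart by their domains: from-maps are defined at x or y and
  only on dom e or only on dom \<eta>; to-maps are defined at a point u above x and, when
  u \<in> dom e, only on dom e \<inter> dom \<eta>, which contains neither x nor y.\<close>
lemma from_shape:
  assumes "\<phi> \<in> from_x ` below_x \<union> from_y ` below_x"
  shows "(x \<in> dom \<phi> \<and> dom \<phi> \<subseteq> dom e) \<or> (y \<in> dom \<phi> \<and> dom \<phi> \<subseteq> dom \<eta>)"
proof -
  obtain z where "z \<in> below_x" "\<phi> = from_x z \<or> \<phi> = from_y z" using assms by blast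
  then show ?thesis using from_x[of z] from_y[of z] by blast
qed

lemma to_shape:
  assumes "\<phi> \<in> to_x ` above_x \<union> to_y ` above_x"
  obtains u where "u \<in> above_x" "u \<in> dom \<phi>" "u \<in> dom e \<Longrightarrow> dom \<phi> \<subseteq> dom e \<inter> dom \<eta>"
proof -
  obtain u where "u \<in> above_x" "\<phi> = to_x u \<or> \<phi> = to_y u" using assms by blast
  then show ?thesis using that to_x(2,4)[of u] to_y(2,3)[of u] by blast
qed

lemma from_to_disjoint:
  "(from_x ` below_x \<union> from_y ` below_x) \<inter> (to_x ` above_x \<union> to_y ` above_x) = {}"
proof (rule equals0I)
  fix \<phi> assume \<phi>: "\<phi> \<in> (from_x ` below_x \<union> from_y ` below_x) \<inter> (to_x ` above_x \<union> to_y ` above_x)"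
  then have shape: "(x \<in> dom \<phi> \<and> dom \<phi> \<subseteq> dom e) \<or> (y \<in> dom \<phi> \<and> dom \<phi> \<subseteq> dom \<eta>)"
    by (intro from_shape) blast
  from \<phi> have "\<phi> \<in> to_x ` above_x \<union> to_y ` above_x" by blast
  then obtain u where u: "u \<in> above_x" "u \<in> dom \<phi>"
    and guarded: "u \<in> dom e \<Longrightarrow> dom \<phi> \<subseteq> dom e \<inter> dom \<eta>"
    by (rule to_shape) auto
  show False
  proof (cases "u \<in> dom e")
    case True
    then show False using shape guarded x_notin_dom_\<eta> y_dom by blast
  next
    case False
    then have "u \<notin> dom \<eta>" using above_x_dom_iff u(1) by blast
    then show False using shape u(2) False by blast
  qed
qed

text \<open>\<epsilon> is none of these maps, since x, y \<notin> dom \<epsilon> and \<epsilon> fixes every point of its domain.\<close>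
lemma \<epsilon>_new: "\<epsilon> \<notin> from_x ` below_x \<union> from_y ` below_x \<union> (to_x ` above_x \<union> to_y ` above_x)"
proof
  assume "\<epsilon> \<in> from_x ` below_x \<union> from_y ` below_x \<union> (to_x ` above_x \<union> to_y ` above_x)"
  moreover have "\<epsilon> \<notin> from_x ` below_x \<union> from_y ` below_x"
  proof
    assume "\<epsilon> \<in> from_x ` below_x \<union> from_y ` below_x"
    then have "x \<in> dom \<epsilon> \<or> y \<in> dom \<epsilon>" using from_shape by blast
    then show False using x_notin_dom_\<eta> y_dom by (simp add: dom_\<epsilon>)
  qed
  ultimately obtain u where u: "u \<in> above_x" "\<epsilon> = to_x u \<or> \<epsilon> = to_y u" by blast
  then have "\<epsilon> u = Some x \<or> \<epsilon> u = Some y" using to_x(2) to_y(2) by metis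
  then have "u = x \<or> u = y" by (simp add: \<epsilon>_apply split: if_splits)
  then have "reach S x u" using x_y reach_trans[OF x_y y_x] by blast
  then show False using u(1) by (simp add: above_x_def)
qed

definition family where
  "family = insert \<epsilon> (from_x ` below_x \<union> from_y ` below_x \<union> (to_x ` above_x \<union> to_y ` above_x))"

lemma family_subset: "family \<subseteq> S"
  using \<epsilon>_in from_x from_y to_x(1) to_y(1) by (auto simp: family_def)

lemma card_family: "card family = 2 * (card below_x + card above_x) + 1"
  using card_Un_disjoint[OF _ _ from_to_disjoint] card_from card_to \<epsilon>_new
    finite_below_x finite_above_x by (simp add: family_def)

text \<open>The contradiction with |S| \<le> 2n: by semitransitivity the points below x and strictly above
  x partition X, so the family has 2n + 1 elements.\<close>
lemma card_lower_bound:
  assumes "semitransitive n S"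
  shows "2 * n + 1 \<le> card S"
proof -
  have "p \<in> below_x \<union> above_x" if "p \<in> {1..n}" for p
    using that semitransitive_reach_total[OF assms, of x p] reach_in_X[OF x_y]
    by (auto simp: below_x_def above_x_def)
  then have "{1..n} = below_x \<union> above_x" using below_x_subset above_x_subset by blast
  moreover have "below_x \<inter> above_x = {}" by (auto simp: below_x_def above_x_def)
  ultimately have "card below_x + card above_x = n"
    using card_Un_disjoint[OF finite_below_x finite_above_x] by (metis card_atLeastAtMost diff_Suc_1)
  then have "card family = 2 * n + 1" using card_family by simp
  then show ?thesis using card_mono[OF finite_S family_subset] by simp
qed

end

context partial_inj_semigroup
begin

lemma no_separation:
  assumes "semitransitive n S" "card S \<le> 2 * n" "separates S e p q"
  shows False
proof -
  obtain e x y where "extremal_separation n S e x y"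
    using extremal_separation_exists[OF assms(3)] partial_inj_semigroup_axioms
    by (metis extremal_separation.intro extremal_separation_axioms.intro)
  then have "2 * n + 1 \<le> card S" using extremal_separation.card_lower_bound assms(1) by blast
  then show False using assms(2) by simp
qed

end

text \<open>Two points of a transitivity block reach each other; so a block meeting dom e without being
  contained in it yields a separation.\<close>
theorem lemma2p3:
  fixes n :: nat and S :: "(nat \<rightharpoonup> nat) set"
  assumes "n \<ge> 2"
    and "S \<subseteq> sym_inv n - sym_grp n"
    and "is_subsemigroup S"
    and "semitransitive n S"
    and "card S \<le> 2 * n"
  shows "\<forall>e\<in>S. idempotent e \<longrightarrow>
           (\<forall>B\<in>trans_blocks n S. dom e \<inter> B = {} \<or> B \<subseteq> dom e)"
proof (intro ballI impI)
  interpret partial_inj_semigroup n S using assms(2,3) by unfold_locales auto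
  fix e B assume e: "e \<in> S" "idempotent e" and "B \<in> trans_blocks n S"
  then obtain b where B: "B = {p \<in> {1..n}. reach S b p \<and> reach S p b}"
    unfolding trans_blocks_def by blast
  show "dom e \<inter> B = {} \<or> B \<subseteq> dom e"
  proof (rule ccontr)
    assume "\<not> (dom e \<inter> B = {} \<or> B \<subseteq> dom e)"
    then obtain p q where "p \<in> dom e \<inter> B" "q \<in> B - dom e" by blast
    then have "separates S e p q" using e B reach_trans by (auto simp: separates_def)
    then show False using no_separation assms(4,5) by blast
  qed
qed

end
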